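(* Let $G$ be an lcsc group with Haar measure $m_G$, let $V\subset G$ be a compact symmetric neighbourhood of the identity generating $G$, and let $d_V$ be the associated word metric with balls $B_n=\{g: d_V(e,g)\le n\}=V^n$, $n\in\mathbb{N}$. Assume the doubling condition: there is $C_0$ with $m_G(B_{2n})\le C_0\, m_G(B_n)$ for all integers $n\ge 1$. Then there exist constants $\delta>0$ and $C>0$ such that $m_G(B_{n+1}\setminus B_n)\le C n^{-\delta} m_G(B_n)$ for all integers $n\ge 1$. In particular, the balls are asymptotically invariant under right translations: $\lim_{n\to\infty} m_G(B_ng\,\Delta\, B_n)/m_G(B_n)=0$ for every $g\in G$.
   Context: For a compact symmetric generating set $V$ (i.e. $V=V^{-1}$ and $\bigcup_n V^n=G$), $|g|_V=\min\{n: g\in V^n\}$ with $V^0=\{e\}$ and $V^n$ the set of $n$-fold products of elements of $V$; the word metric is $d_V(g,h)=|g^{-1}h|_V$, which is left-invariant. $\Delta$ denotes symmetric difference. *)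

theory Defs
  imports "HOL-Analysis.Analysis"
begin

text \<open>The group G is modelled as a type of class group_add (which in Isabelle/HOL is NOT
  assumed commutative); the group law is written additively: g + h is the product gh,
  0 the identity e, -g the inverse.\<close>

definition topological_group :: "'a::{group_add,topological_space} itself \<Rightarrow> bool" where
  "topological_group _ \<longleftrightarrow>
     continuous_on UNIV (\<lambda>p::'a \<times> 'a. fst p + snd p) \<and> continuous_on UNIV (uminus :: 'a \<Rightarrow> 'a)"

definition locally_compact_space_type :: "'a::topological_space itself \<Rightarrow> bool" where
  "locally_compact_space_type _ \<longleftrightarrow>
     (\<forall>x::'a. \<exists>U K. open U \<and> compact K \<and> x \<in> U \<and> U \<subseteq> K)"

definition left_haar_measure :: "'a::{group_add,topological_space} measure \<Rightarrow> bool" where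
  "left_haar_measure M \<longleftrightarrow>
     sets M = sets borel \<and>
     (\<forall>A\<in>sets M. \<forall>g. emeasure M ((\<lambda>x. g + x) ` A) = emeasure M A) \<and>
     (\<forall>K. compact K \<longrightarrow> emeasure M K < \<infinity>) \<and>
     (\<forall>U. open U \<and> U \<noteq> {} \<longrightarrow> emeasure M U > 0) \<and>
     (\<forall>A\<in>sets M. emeasure M A = (INF U\<in>{U. open U \<and> A \<subseteq> U}. emeasure M U)) \<and>
     (\<forall>U. open U \<longrightarrow> emeasure M U = (SUP K\<in>{K. compact K \<and> K \<subseteq> U}. emeasure M K))"

fun setpow :: "'a::group_add set \<Rightarrow> nat \<Rightarrow> 'a set" where
  "setpow V 0 = {0}"
| "setpow V (Suc n) = {v + w | v w. v \<in> V \<and> w \<in> setpow V n}"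

definition sym_diff :: "'a set \<Rightarrow> 'a set \<Rightarrow> 'a set" where
  "sym_diff A B = (A - B) \<union> (B - A)"

end

theory Submission
  imports Defs
begin

text \<open>Write B(n) for V^n and |A| for Haar measure. Covering and packing arguments in the word
  metric, together with doubling, show that the outer shell B(n+s) - B(n) has measure at most
  C0^4 times that of the inner shell B(n) - B(n-s). So the outer shell carries at most the fraction
  \<theta> = C0^4 / (C0^4 + 1) of the shell B(n+s) - B(n-s) of twice the width, and doubling the width
  about log2(n/s) times gives |B(n+s) - B(n)| \<le> \<theta>^k |B(n+s)|, which is of order n^(-\<delta>) |B(n)|
  with \<delta> = -log2 \<theta>. Right translation by g moves every point by |g| in the word metric, so
  B(n) g \<Delta> B(n) lies in the two shells of width |g| on either side of the boundary of B(n).\<close>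

lemma image_add_left_eq_vimage:
  fixes x :: "'a::group_add"
  shows "(\<lambda>y. x + y) ` A = (\<lambda>y. -x + y) -` A"
proof (intro set_eqI iffI)
  fix z assume "z \<in> (\<lambda>y. -x + y) -` A"
  then have "-x + z \<in> A"
    by simp
  moreover have "z = x + (-x + z)"
    by (simp add: add.assoc[symmetric])
  ultimately show "z \<in> (\<lambda>y. x + y) ` A"
    by (rule rev_image_eqI)
qed (auto simp: add.assoc[symmetric])

lemma image_add_right_eq_vimage:
  fixes x :: "'a::group_add"
  shows "(\<lambda>y. y + x) ` A = (\<lambda>y. y + -x) -` A"
proof (intro set_eqI iffI)
  fix z assume "z \<in> (\<lambda>y. y + -x) -` A"
  then have "z + -x \<in> A"
    by simp
  moreover have "z = (z + -x) + x"
    by (simp add: add.assoc)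
  ultimately show "z \<in> (\<lambda>y. y + x) ` A"
    by (rule rev_image_eqI)
qed (auto simp: add.assoc)

lemma setpow_add: "setpow V (m + n) = {y + z | y z. y \<in> setpow V m \<and> z \<in> setpow V n}"
proof (induction m)
  case 0
  then show ?case by auto
next
  case (Suc m)
  show ?case
  proof (intro set_eqI iffI)
    fix x assume "x \<in> setpow V (Suc m + n)"
    then obtain v y z where "v \<in> V" "y \<in> setpow V m" "z \<in> setpow V n" "x = v + (y + z)"
      using Suc.IH by auto
    moreover from this have "v + y \<in> setpow V (Suc m)"
      by auto
    ultimately show "x \<in> {y + z | y z. y \<in> setpow V (Suc m) \<and> z \<in> setpow V n}"
      by (metis (mono_tags, lifting) add.assoc mem_Collect_eq)
  next
    fix x assume "x \<in> {y + z | y z. y \<in> setpow V (Suc m) \<and> z \<in> setpow V n}"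
    then obtain v y z where "v \<in> V" "y \<in> setpow V m" "z \<in> setpow V n" "x = v + (y + z)"
      by (auto simp: add.assoc)
    then show "x \<in> setpow V (Suc m + n)"
      using Suc.IH by auto
  qed
qed

lemma setpow_1 [simp]: "setpow V 1 = V"
  by auto

lemma setpow_mono:
  assumes "0 \<in> V" and "m \<le> n"
  shows "setpow V m \<subseteq> setpow V n"
  using assms(2)
proof (induction n rule: dec_induct)
  case (step n)
  have "setpow V n \<subseteq> setpow V (Suc n)"
    using assms(1) by force
  with step.IH show ?case by blast
qed simp

lemma uminus_mem_setpow:
  assumes "uminus ` V = V" and "g \<in> setpow V n"
  shows "-g \<in> setpow V n"
  using assms(2)
proof (induction n arbitrary: g)
  case (Suc n)
  then obtain v w where "v \<in> V" "w \<in> setpow V n" "g = v + w"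
    by auto
  moreover have "-v \<in> V"
    using assms(1) \<open>v \<in> V\<close> by force
  moreover have "-w \<in> setpow V n"
    using Suc.IH \<open>w \<in> setpow V n\<close> .
  ultimately have "-w + -v \<in> {y + z | y z. y \<in> setpow V n \<and> z \<in> setpow V 1}"
    by (simp only: setpow_1) blast
  then have "-w + -v \<in> setpow V (n + 1)"
    unfolding setpow_add .
  then show ?case
    using \<open>g = v + w\<close> by (simp add: minus_add)
qed simp

lemma ex_dyadic_scale:
  fixes n s :: nat
  assumes "0 < s"
  obtains k where "2^k * s \<le> n + s" and "n < 2^(k + 1) * s"
proof -
  define m where "m = (n + s) div s"
  have "1 \<le> m"
    unfolding m_def using assms by (simp add: div_greater_zero_iff Suc_le_eq)
  then obtain k where k: "2^k \<le> m" "m < 2^(k + 1)"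
    using ex_power_ivl1[of 2 m] by auto
  have "2^k * s \<le> m * s"
    using k(1) by simp
  also have "m * s \<le> n + s"
    unfolding m_def by (simp add: div_times_less_eq_dividend)
  finally have "2^k * s \<le> n + s" .
  have "(m + 1) * s = n div s * s + 2 * s"
    unfolding m_def using assms by (simp add: algebra_simps)
  moreover have "n div s * s + n mod s = n" "n mod s < s"
    using assms by simp_all
  ultimately have "n + s < (m + 1) * s"
    by linarith
  also have "(m + 1) * s \<le> 2^(k + 1) * s"
    using k(2) by (intro mult_right_mono) simp_all
  finally have "n < 2^(k + 1) * s"
    by simp
  with \<open>2^k * s \<le> n + s\<close> show ?thesis
    by (rule that)
qed

definition word_length :: "'a::group_add set \<Rightarrow> 'a \<Rightarrow> nat" where
  "word_length V g = (LEAST n. g \<in> setpow V n)"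

definition word_dist :: "'a::group_add set \<Rightarrow> 'a \<Rightarrow> 'a \<Rightarrow> nat" where
  "word_dist V g h = word_length V (-g + h)"

locale word_metric =
  fixes V :: "'a::group_add set"
  assumes zero_in_V: "0 \<in> V"
    and uminus_V: "uminus ` V = V"
    and generating: "(\<Union>n. setpow V n) = UNIV"
begin

abbreviation B :: "nat \<Rightarrow> 'a set" where "B \<equiv> setpow V"
abbreviation len :: "'a \<Rightarrow> nat" where "len \<equiv> word_length V"
abbreviation wdist :: "'a \<Rightarrow> 'a \<Rightarrow> nat" where "wdist \<equiv> word_dist V"

lemma B_mono: "m \<le> n \<Longrightarrow> B m \<subseteq> B n"
  using setpow_mono[OF zero_in_V] .

lemma mem_B_iff: "g \<in> B n \<longleftrightarrow> len g \<le> n"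
proof
  assume "g \<in> B n"
  then show "len g \<le> n"
    unfolding word_length_def by (rule Least_le)
next
  assume "len g \<le> n"
  have "\<exists>n. g \<in> B n"
    using generating by (metis UNIV_I UN_E)
  then have "g \<in> B (len g)"
    unfolding word_length_def by (rule LeastI_ex)
  with B_mono[OF \<open>len g \<le> n\<close>] show "g \<in> B n" by blast
qed

lemma word_length_zero [simp]: "len 0 = 0"
  using mem_B_iff[of 0 0] by simp

lemma word_length_uminus [simp]: "len (-g) = len g"
proof -
  have "len (-h) \<le> len h" for h
    by (metis mem_B_iff order_refl uminus_mem_setpow[OF uminus_V])
  from this[of g] this[of "-g"] show ?thesis by simp
qed

lemma word_length_add: "len (g + h) \<le> len g + len h"
proof -
  have "g + h \<in> B (len g + len h)"
    unfolding setpow_add using mem_B_iff by blast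
  then show ?thesis
    using mem_B_iff by blast
qed

lemma word_dist_zero_left [simp]: "wdist 0 g = len g"
  by (simp add: word_dist_def)

lemma word_dist_commute: "wdist g h = wdist h g"
  unfolding word_dist_def by (metis word_length_uminus minus_add minus_minus)

lemma word_dist_triangle: "wdist x y \<le> wdist x z + wdist z y"
proof -
  have "-x + y = (-x + z) + (-z + y)"
    by (simp add: add.assoc[symmetric])
  then show ?thesis
    unfolding word_dist_def by (metis word_length_add)
qed

lemma word_length_le_dist: "len y \<le> len x + wdist x y"
  using word_dist_triangle[of 0 y x] by simp

lemma word_length_split:
  assumes "k \<le> len x"
  obtains y where "len y = k" and "wdist y x = len x - k"
proof -
  have "x \<in> B (k + (len x - k))"
    using mem_B_iff assms by simp
  then obtain y z where yz: "y \<in> B k" "z \<in> B (len x - k)" "x = y + z"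
    unfolding setpow_add by blast
  then have "z = -y + x"
    by (simp add: add.assoc[symmetric])
  moreover have "len x \<le> len y + len z"
    using word_length_add yz(3) by simp
  ultimately show ?thesis
    using that[of y] yz mem_B_iff assms unfolding word_dist_def by force
qed

lemma shell_point_near_sphere:
  assumes "x \<in> B (n + s) - B n" and "r \<le> n"
  obtains y where "len y = n - r" and "wdist y x \<le> s + r"
proof -
  have "n < len x" "len x \<le> n + s"
    using assms(1) by (auto simp: mem_B_iff not_le)
  then have "n - r \<le> len x"
    by linarith
  then obtain y where "len y = n - r" "wdist y x = len x - (n - r)"
    by (rule word_length_split)
  moreover have "len x - (n - r) \<le> s + r"
    using \<open>len x \<le> n + s\<close> by linarith
  ultimately have "wdist y x \<le> s + r"
    by simp
  with \<open>len y = n - r\<close> show ?thesis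
    by (rule that)
qed

definition word_ball :: "'a \<Rightarrow> nat \<Rightarrow> 'a set" where
  "word_ball x r = (\<lambda>y. x + y) ` B r"

lemma mem_word_ball: "z \<in> word_ball x r \<longleftrightarrow> wdist x z \<le> r"
  unfolding word_ball_def image_add_left_eq_vimage word_dist_def mem_B_iff[symmetric] by simp

lemma disjnt_word_ball:
  assumes "2 * r < wdist x y"
  shows "disjnt (word_ball x r) (word_ball y r)"
proof (unfold disjnt_def, rule equals0I)
  fix z assume "z \<in> word_ball x r \<inter> word_ball y r"
  then have "wdist x z \<le> r" "wdist y z \<le> r"
    by (simp_all add: mem_word_ball)
  then have "wdist x y \<le> 2 * r"
    using word_dist_triangle[of x y z] word_dist_commute[of z y] by linarith
  with assms show False
    by linarith
qed

lemma maximal_separated_subset: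
  assumes bounded: "\<And>F. finite F \<Longrightarrow> F \<subseteq> T \<Longrightarrow> pairwise (\<lambda>x y. R < wdist x y) F \<Longrightarrow> card F \<le> N"
  obtains F where "finite F" "F \<subseteq> T" "pairwise (\<lambda>x y. R < wdist x y) F"
    and "T \<subseteq> (\<Union>x\<in>F. word_ball x R)"
proof -
  let ?sep = "\<lambda>F. finite F \<and> F \<subseteq> T \<and> pairwise (\<lambda>x y. R < wdist x y) F"
  have "\<exists>F. ?sep F \<and> card F = 0"
    by (intro exI[of _ "{}"]) simp
  moreover have "\<forall>c. (\<exists>F. ?sep F \<and> card F = c) \<longrightarrow> c \<le> N"
  proof (intro allI impI)
    fix c assume "\<exists>F. ?sep F \<and> card F = c"
    then obtain F where "?sep F" "card F = c"
      by blast
    then show "c \<le> N"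
      using bounded[of F] by simp
  qed
  ultimately have "\<exists>c. (\<exists>F. ?sep F \<and> card F = c) \<and>
      (\<forall>c'. (\<exists>F. ?sep F \<and> card F = c') \<longrightarrow> c' \<le> c)"
    by (rule Nat.ex_has_greatest_nat)
  then obtain F where F: "?sep F"
    and F_max: "\<And>F'. ?sep F' \<Longrightarrow> card F' \<le> card F"
    by metis
  have "z \<in> (\<Union>x\<in>F. word_ball x R)" if "z \<in> T" for z
  proof (rule ccontr)
    assume "z \<notin> (\<Union>x\<in>F. word_ball x R)"
    then have far: "R < wdist x z" if "x \<in> F" for x
      using that by (auto simp: mem_word_ball not_le)
    then have "z \<notin> F"
      by (fastforce simp: word_dist_def)
    have "pairwise (\<lambda>x y. R < wdist x y) (insert z F)"
      using F(1) far word_dist_commute[of z] by (auto simp: pairwise_insert)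
    with F(1) \<open>z \<in> T\<close> have "?sep (insert z F)"
      by simp
    then have "card (insert z F) \<le> card F"
      by (rule F_max)
    then show False
      using F \<open>z \<notin> F\<close> by simp
  qed
  with F that show ?thesis
    by blast
qed

end

locale doubling_word_metric = word_metric V for V :: "'a::group_add set" +
  fixes M :: "'a measure" and C0 :: real
  assumes setpow_fmeasurable: "setpow V n \<in> fmeasurable M"
    and sets_translate_left: "A \<in> sets M \<Longrightarrow> (\<lambda>y. x + y) ` A \<in> sets M"
    and sets_translate_right: "A \<in> sets M \<Longrightarrow> (\<lambda>y. y + x) ` A \<in> sets M"
    and emeasure_translate_left: "A \<in> sets M \<Longrightarrow> emeasure M ((\<lambda>y. x + y) ` A) = emeasure M A"
    and measure_V_pos: "0 < measure M V"
    and doubling: "\<forall>n. n \<ge> 1 \<longrightarrow> measure M (setpow V (2*n)) \<le> C0 * measure M (setpow V n)"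
begin

lemma B_sets: "B n \<in> sets M"
  using setpow_fmeasurable by (rule fmeasurableD)

lemma measure_B_mono: "m \<le> n \<Longrightarrow> measure M (B m) \<le> measure M (B n)"
  by (rule measure_mono_fmeasurable[OF B_mono B_sets setpow_fmeasurable])

lemma measure_B_pos: "1 \<le> n \<Longrightarrow> 0 < measure M (B n)"
  using measure_B_mono[of 1 n] measure_V_pos by simp

lemma measure_annulus: "m \<le> n \<Longrightarrow> measure M (B n - B m) = measure M (B n) - measure M (B m)"
  using setpow_fmeasurable[of n] B_sets B_mono by (intro measure_Diff) (auto simp: fmeasurable_def)

lemma annulus_fmeasurable: "B n - B m \<in> fmeasurable M"
  using setpow_fmeasurable B_sets by (rule fmeasurable_Diff)

lemma doubling_constant_ge_1: "1 \<le> C0"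
proof -
  have "measure M (B 1) \<le> measure M (B 2)"
    by (rule measure_B_mono) simp
  also have "\<dots> \<le> C0 * measure M (B 1)"
    using doubling[rule_format, of 1] by simp
  finally show ?thesis
    using measure_B_pos[of 1] by simp
qed

lemma measure_B_doubling_iterate:
  assumes "1 \<le> n" and "m \<le> 2^j * n"
  shows "measure M (B m) \<le> C0^j * measure M (B n)"
  using assms(2)
proof (induction j arbitrary: m)
  case 0
  then show ?case using measure_B_mono by simp
next
  case (Suc j)
  have "measure M (B m) \<le> measure M (B (2 * (2^j * n)))"
    using Suc.prems by (intro measure_B_mono) simp
  also have "\<dots> \<le> C0 * measure M (B (2^j * n))"
    using doubling assms(1) by simp
  also have "\<dots> \<le> C0 * (C0^j * measure M (B n))"
    using Suc.IH[of "2^j * n"] doubling_constant_ge_1 by simp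
  finally show ?case by simp
qed

lemma word_ball_fmeasurable: "word_ball x r \<in> fmeasurable M"
  using setpow_fmeasurable[of r] sets_translate_left[OF B_sets] emeasure_translate_left[OF B_sets]
  unfolding word_ball_def fmeasurable_def by simp

lemma word_ball_sets: "word_ball x r \<in> sets M"
  using word_ball_fmeasurable by (rule fmeasurableD)

lemma measure_word_ball: "measure M (word_ball x r) = measure M (B r)"
  unfolding word_ball_def measure_def by (simp add: emeasure_translate_left[OF B_sets])

lemma packing_bound:
  assumes "finite F"
    and separated: "pairwise (\<lambda>x y. 2 * r < wdist (c x) (c y)) F"
    and inside: "\<And>x. x \<in> F \<Longrightarrow> word_ball (c x) r \<subseteq> A"
    and "A \<in> fmeasurable M"
  shows "card F * measure M (B r) \<le> measure M A"
proof -
  have "pairwise (\<lambda>x y. disjnt (word_ball (c x) r) (word_ball (c y) r)) F"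
    using separated disjnt_word_ball by (auto simp: pairwise_def)
  then have "measure M (\<Union>x\<in>F. word_ball (c x) r) = (\<Sum>x\<in>F. measure M (word_ball (c x) r))"
    using \<open>finite F\<close> word_ball_fmeasurable by (intro measure_UNION')
  also have "\<dots> = card F * measure M (B r)"
    by (simp add: measure_word_ball)
  finally show ?thesis
    using inside assms(1,4) word_ball_sets
    by (metis UN_least measure_mono_fmeasurable sets.finite_UN)
qed

lemma covering_bound:
  assumes "finite F" and "T \<subseteq> (\<Union>x\<in>F. word_ball x R)" and "T \<in> sets M"
  shows "measure M T \<le> card F * measure M (B R)"
proof -
  have "measure M T \<le> measure M (\<Union>x\<in>F. word_ball x R)"
    using assms word_ball_sets word_ball_fmeasurable by (intro measure_mono_fmeasurable) auto
  also have "\<dots> \<le> (\<Sum>x\<in>F. measure M (word_ball x R))"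
    using assms(1) word_ball_sets by (rule measure_UNION_le)
  also have "\<dots> = card F * measure M (B R)"
    by (simp add: measure_word_ball)
  finally show ?thesis .
qed

lemma packing_in_ball:
  assumes "finite F" and "F \<subseteq> B m" and "pairwise (\<lambda>x y. 2 * r < wdist x y) F"
  shows "card F * measure M (B r) \<le> measure M (B (m + r))"
proof (rule packing_bound[OF assms(1), where c = "\<lambda>x. x"])
  fix x assume "x \<in> F"
  then have "len x \<le> m"
    using assms(2) by (auto simp: mem_B_iff)
  show "word_ball x r \<subseteq> B (m + r)"
  proof
    fix z assume "z \<in> word_ball x r"
    then have "wdist x z \<le> r"
      by (simp add: mem_word_ball)
    with \<open>len x \<le> m\<close> show "z \<in> B (m + r)"
      using word_length_le_dist[of z x] by (simp add: mem_B_iff)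
  qed
qed (use assms(3) setpow_fmeasurable in simp_all)

lemma annulus_inner_packing:
  assumes "finite F" and F_annulus: "F \<subseteq> B (n + s) - B n"
    and separated: "pairwise (\<lambda>x y. 2 * s + 4 * r < wdist x y) F"
    and "2 * r < s" and "s \<le> n"
  shows "card F * measure M (B r) \<le> measure M (B n - B (n - s))"
proof -
  have "\<exists>y. len y = n - r \<and> wdist y x \<le> s + r" if "x \<in> F" for x
  proof -
    have "x \<in> B (n + s) - B n" "r \<le> n"
      using that F_annulus assms(4,5) by auto
    then obtain y where "len y = n - r" "wdist y x \<le> s + r"
      by (rule shell_point_near_sphere)
    then show ?thesis
      by blast
  qed
  then obtain c where "\<forall>x\<in>F. len (c x) = n - r \<and> wdist (c x) x \<le> s + r"
    by metis
  then have c_len: "\<And>x. x \<in> F \<Longrightarrow> len (c x) = n - r"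
    and c_dist: "\<And>x. x \<in> F \<Longrightarrow> wdist (c x) x \<le> s + r"
    by blast+
  show ?thesis
  proof (rule packing_bound[OF \<open>finite F\<close>, where c = c])
    show "pairwise (\<lambda>x y. 2 * r < wdist (c x) (c y)) F"
    proof (rule pairwiseI)
      fix x y assume "x \<in> F" "y \<in> F" "x \<noteq> y"
      have "wdist x y \<le> wdist x (c x) + wdist (c x) (c y) + wdist (c y) y"
        using word_dist_triangle[of x y "c x"] word_dist_triangle[of "c x" y "c y"] by linarith
      moreover have "2 * s + 4 * r < wdist x y"
        using separated \<open>x \<in> F\<close> \<open>y \<in> F\<close> \<open>x \<noteq> y\<close> unfolding pairwise_def by blast
      moreover have "wdist x (c x) \<le> s + r" "wdist (c y) y \<le> s + r"
        using c_dist[OF \<open>x \<in> F\<close>] c_dist[OF \<open>y \<in> F\<close>] word_dist_commute[of x "c x"] by simp_all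
      ultimately show "2 * r < wdist (c x) (c y)"
        by linarith
    qed
  next
    fix x assume "x \<in> F"
    show "word_ball (c x) r \<subseteq> B n - B (n - s)"
    proof
      fix z assume "z \<in> word_ball (c x) r"
      then have "wdist (c x) z \<le> r" "len (c x) = n - r"
        using c_len[OF \<open>x \<in> F\<close>] mem_word_ball by auto
      moreover have "len z \<le> len (c x) + wdist (c x) z" "len (c x) \<le> len z + wdist (c x) z"
        using word_length_le_dist[of "c x" z] word_length_le_dist[of z "c x"]
          word_dist_commute[of z "c x"] by simp_all
      ultimately have "len z \<le> n" "n - s < len z"
        using assms(4,5) by linarith+
      then show "z \<in> B n - B (n - s)"
        by (simp add: mem_B_iff)
    qed
  qed (rule annulus_fmeasurable)
qed

text \<open>A maximal separated subset of the outer shell gives a covering of it by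
  balls of radius \<open>R\<close> and, after moving every centre inwards along a geodesic, a packing of the
  inner shell by balls of radius \<open>r\<close>; doubling compares the two radii.\<close>
lemma annulus_outer_le_inner:
  assumes "3 \<le> s" and "s \<le> n"
  shows "measure M (B (n + s) - B n) \<le> C0^4 * measure M (B n - B (n - s))"
proof -
  define r where "r = (s - 1) div 2"
  define R where "R = 2 * s + 4 * r"
  have "2 * r + 1 \<le> s" "s \<le> 2 * r + 2"
    using assms(1) unfolding r_def by presburger+
  then have r: "1 \<le> r" "2 * r < s" "R \<le> 2^4 * r" "2 * r \<le> R"
    using assms(1) unfolding R_def by auto
  let ?T = "B (n + s) - B n"
  define N where "N = nat \<lceil>measure M (B (n + s + r)) / measure M (B r)\<rceil>"
  have "card F \<le> N" if "finite F" "F \<subseteq> ?T" "pairwise (\<lambda>x y. R < wdist x y) F" for F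
  proof -
    have "pairwise (\<lambda>x y. 2 * r < wdist x y) F"
      using r(4) by (intro pairwise_mono[OF that(3)]) auto
    with that(1,2) have "card F * measure M (B r) \<le> measure M (B (n + s + r))"
      by (intro packing_in_ball) auto
    then have "card F \<le> measure M (B (n + s + r)) / measure M (B r)"
      using measure_B_pos[OF r(1)] by (simp add: pos_le_divide_eq)
    then show ?thesis
      unfolding N_def by linarith
  qed
  then obtain F where F: "finite F" "F \<subseteq> ?T" "pairwise (\<lambda>x y. R < wdist x y) F"
    and cover: "?T \<subseteq> (\<Union>x\<in>F. word_ball x R)"
    by (rule maximal_separated_subset)
  have "measure M ?T \<le> card F * measure M (B R)"
    by (intro covering_bound F(1) cover fmeasurableD[OF annulus_fmeasurable])
  also have "\<dots> \<le> card F * (C0^4 * measure M (B r))"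
    using measure_B_doubling_iterate[OF r(1,3)] by (intro mult_left_mono) auto
  also have "\<dots> = C0^4 * (card F * measure M (B r))"
    by simp
  also have "\<dots> \<le> C0^4 * measure M (B n - B (n - s))"
    using F r(2) assms(2) doubling_constant_ge_1 unfolding R_def
    by (intro mult_left_mono annulus_inner_packing) auto
  finally show ?thesis .
qed

definition contraction :: real where
  "contraction = C0^4 / (C0^4 + 1)"

lemma contraction_pos: "0 < contraction" and contraction_less_1: "contraction < 1"
proof -
  have "1 \<le> C0^4"
    using doubling_constant_ge_1 by (simp add: one_le_power)
  then show "0 < contraction"
    unfolding contraction_def by (intro divide_pos_pos) auto
  from \<open>1 \<le> C0^4\<close> show "contraction < 1"
    unfolding contraction_def by (simp add: divide_less_eq)
qed

lemma annulus_contraction: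
  assumes "3 \<le> s" and "s \<le> n"
  shows "measure M (B (n + s) - B n) \<le> contraction * measure M (B (n + s) - B (n - s))"
proof -
  let ?outer = "measure M (B (n + s) - B n)" and ?inner = "measure M (B n - B (n - s))"
  have "measure M (B (n + s) - B (n - s)) = ?outer + ?inner"
    using measure_annulus[of "n - s" "n + s"] measure_annulus[of n "n + s"]
      measure_annulus[of "n - s" n] by simp
  moreover have "(C0^4 + 1) * ?outer \<le> C0^4 * (?outer + ?inner)"
    using annulus_outer_le_inner[OF assms] by (simp add: algebra_simps)
  moreover have "0 < C0^4 + 1"
    using doubling_constant_ge_1 by (simp add: add_nonneg_pos)
  ultimately show ?thesis
    unfolding contraction_def by (simp add: field_simps)
qed

lemma annulus_contraction_iterate:
  "3 \<le> s \<Longrightarrow> 2^k * s \<le> n + s \<Longrightarrow>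
    measure M (B (n + s) - B n) \<le> contraction^k * measure M (B (n + s))"
proof (induction k arbitrary: n s)
  case 0
  then show ?case
    using measure_annulus[of n "n + s"] by simp
next
  case (Suc k)
  have "(2::nat) \<le> 2^Suc k"
    by (simp add: one_le_power)
  then have "2 * s \<le> 2^Suc k * s"
    by (rule mult_right_mono) simp
  with Suc.prems have "s \<le> n"
    by linarith
  have "measure M (B (n + s) - B n) \<le> contraction * measure M (B (n + s) - B (n - s))"
    using annulus_contraction[OF Suc.prems(1) \<open>s \<le> n\<close>] .
  also have "B (n + s) - B (n - s) = B ((n - s) + 2 * s) - B (n - s)"
    using \<open>s \<le> n\<close> by (simp add: algebra_simps)
  also have "measure M \<dots> \<le> contraction^k * measure M (B ((n - s) + 2 * s))"
    using Suc.prems \<open>s \<le> n\<close> by (intro Suc.IH) (simp_all add: algebra_simps)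
  also have "B ((n - s) + 2 * s) = B (n + s)"
    using \<open>s \<le> n\<close> by (simp add: algebra_simps)
  finally show ?case
    using contraction_pos by (simp add: mult_left_mono)
qed

definition decay_exponent :: real where
  "decay_exponent = - log 2 contraction"

lemma decay_exponent_pos: "0 < decay_exponent"
  unfolding decay_exponent_def using contraction_pos contraction_less_1 by simp

lemma contraction_power_le:
  fixes n s k :: nat
  assumes "1 \<le> n" and "1 \<le> s" and "n < 2^(k + 1) * s"
  shows "contraction^k \<le> (2 * real s) powr decay_exponent * real n powr (- decay_exponent)"
proof -
  have "contraction = 2 powr (- decay_exponent)"
    unfolding decay_exponent_def using contraction_pos by simp
  then have "contraction^k = (2^k) powr (- decay_exponent)"
    by (simp add: powr_realpow[symmetric] powr_powr mult.commute)
  also have "\<dots> \<le> (real n / (2 * real s)) powr (- decay_exponent)"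
  proof (rule powr_mono2')
    have "real n < 2^(k + 1) * real s"
      using assms(3) by (metis of_nat_less_iff of_nat_mult of_nat_numeral of_nat_power)
    then show "real n / (2 * real s) \<le> 2^k"
      using assms(2) by (simp add: divide_le_eq)
  qed (use assms(1,2) decay_exponent_pos in auto)
  also have "\<dots> = (2 * real s) powr decay_exponent * real n powr (- decay_exponent)"
    using assms(1,2) by (simp add: powr_divide powr_minus field_simps)
  finally show ?thesis .
qed

lemma annulus_decay:
  assumes "3 \<le> s" and "1 \<le> n"
  shows "measure M (B (n + s) - B n)
    \<le> (2 * real s) powr decay_exponent * C0^s * real n powr (- decay_exponent) * measure M (B n)"
proof -
  have "0 < s"
    using assms(1) by simp
  then obtain k where low: "2^k * s \<le> n + s" and high: "n < 2^(k + 1) * s"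
    by (rule ex_dyadic_scale)
  have "n + s \<le> 2^s * n"
  proof -
    have "n + s \<le> n * (1 + s)"
      using assms(2) by (simp add: algebra_simps)
    also have "\<dots> \<le> n * 2^s"
      using less_exp[of s] by (intro mult_left_mono) (simp_all add: Suc_le_eq)
    finally show ?thesis
      by (simp add: mult.commute)
  qed
  then have ball: "measure M (B (n + s)) \<le> C0^s * measure M (B n)"
    by (rule measure_B_doubling_iterate[OF assms(2)])
  have "measure M (B (n + s) - B n) \<le> contraction^k * measure M (B (n + s))"
    by (rule annulus_contraction_iterate[OF assms(1) low])
  also have "\<dots> \<le> ((2 * real s) powr decay_exponent * real n powr (- decay_exponent))
      * (C0^s * measure M (B n))"
    using contraction_power_le[OF assms(2) _ high] assms(1) ball contraction_pos
    by (intro mult_mono) simp_all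
  finally show ?thesis
    by (simp add: algebra_simps)
qed

lemma sphere_decay:
  "\<exists>\<delta>>0. \<exists>C>0. \<forall>n::nat. n \<ge> 1 \<longrightarrow>
    measure M (B (n + 1) - B n) \<le> C * real n powr (-\<delta>) * measure M (B n)"
proof -
  define C where "C = 6 powr decay_exponent * C0^3"
  have "measure M (B (n + 1) - B n) \<le> C * real n powr (- decay_exponent) * measure M (B n)"
    if "1 \<le> n" for n
  proof -
    have "B (n + 1) - B n \<subseteq> B (n + 3) - B n"
      using B_mono[of "n + 1" "n + 3"] by auto
    then have "measure M (B (n + 1) - B n) \<le> measure M (B (n + 3) - B n)"
      by (intro measure_mono_fmeasurable sets.Diff B_sets annulus_fmeasurable)
    also have "\<dots> \<le> C * real n powr (- decay_exponent) * measure M (B n)"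
      using annulus_decay[of 3 n] that unfolding C_def by simp
    finally show ?thesis .
  qed
  moreover have "0 < C"
    unfolding C_def using doubling_constant_ge_1 by simp
  ultimately show ?thesis
    using decay_exponent_pos by blast
qed

lemma sym_diff_right_translate_subset:
  assumes "len g \<le> s" and "s \<le> n"
  shows "sym_diff ((\<lambda>x. x + g) ` B n) (B n) \<subseteq> (B (n + s) - B n) \<union> (B n - B (n - s))"
proof -
  have "z \<in> B (n + s)" if "z \<in> (\<lambda>x. x + g) ` B n" for z
  proof -
    from that obtain y where "y \<in> B n" "z = y + g"
      by blast
    with word_length_add[of y g] assms(1) show ?thesis
      by (simp add: mem_B_iff)
  qed
  moreover have "z \<notin> B (n - s)" if "z \<in> B n - (\<lambda>x. x + g) ` B n" for z
  proof
    assume "z \<in> B (n - s)"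
    with word_length_add[of z "-g"] assms have "z + -g \<in> B n"
      by (simp add: mem_B_iff)
    moreover have "z = (z + -g) + g"
      by (simp add: add.assoc)
    ultimately have "z \<in> (\<lambda>x. x + g) ` B n"
      by (rule rev_image_eqI)
    with that show False
      by blast
  qed
  ultimately show ?thesis
    unfolding sym_diff_def by blast
qed

lemma measure_sym_diff_right_translate_le:
  assumes "3 \<le> s" and "len g \<le> s" and "2 * s \<le> n"
  shows "measure M (sym_diff ((\<lambda>x. x + g) ` B n) (B n))
    \<le> (2 * real s) powr decay_exponent * C0^s * (1 + 2 powr decay_exponent)
      * real n powr (- decay_exponent) * measure M (B n)"
proof -
  define K where "K = (2 * real s) powr decay_exponent * C0^s"
  let ?S = "sym_diff ((\<lambda>x. x + g) ` B n) (B n)"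
  have s: "s \<le> n" "1 \<le> n - s" "1 \<le> n"
    using assms by auto
  have "0 \<le> K"
    unfolding K_def using doubling_constant_ge_1 by simp
  have "real (n - s) powr (- decay_exponent) \<le> (real n / 2) powr (- decay_exponent)"
    using assms(3) s decay_exponent_pos by (intro powr_mono2') auto
  also have "\<dots> = 2 powr decay_exponent * real n powr (- decay_exponent)"
    using s by (simp add: powr_divide powr_minus field_simps)
  finally have half: "real (n - s) powr (- decay_exponent)
    \<le> 2 powr decay_exponent * real n powr (- decay_exponent)" .
  have "?S \<subseteq> (B (n + s) - B n) \<union> (B ((n - s) + s) - B (n - s))"
    using sym_diff_right_translate_subset[OF assms(2) s(1)] s(1) by simp
  moreover have "?S \<in> sets M"
    unfolding sym_diff_def by (intro sets.Un sets.Diff sets_translate_right B_sets)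
  ultimately have "measure M ?S \<le> measure M ((B (n + s) - B n) \<union> (B ((n - s) + s) - B (n - s)))"
    by (intro measure_mono_fmeasurable fmeasurable.Un annulus_fmeasurable)
  also have "\<dots> \<le> measure M (B (n + s) - B n) + measure M (B ((n - s) + s) - B (n - s))"
    by (intro measure_Un_le sets.Diff B_sets)
  also have "\<dots> \<le> K * real n powr (- decay_exponent) * measure M (B n)
      + K * real (n - s) powr (- decay_exponent) * measure M (B (n - s))"
    unfolding K_def by (intro add_mono annulus_decay assms(1) s(2,3))
  also have "\<dots> \<le> K * real n powr (- decay_exponent) * measure M (B n)
      + K * (2 powr decay_exponent * real n powr (- decay_exponent)) * measure M (B n)"
    using half \<open>0 \<le> K\<close> measure_B_mono[of "n - s" n]
    by (intro add_left_mono mult_mono mult_left_mono) simp_all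
  finally show ?thesis
    unfolding K_def by (simp add: algebra_simps)
qed

lemma right_translate_asymptotically_invariant:
  "(\<lambda>n. measure M (sym_diff ((\<lambda>x. x + g) ` B n) (B n)) / measure M (B n)) \<longlonglongrightarrow> 0"
proof -
  define s where "s = max 3 (len g)"
  define D where "D = (2 * real s) powr decay_exponent * C0^s * (1 + 2 powr decay_exponent)"
  have lim: "(\<lambda>n. D * real n powr (- decay_exponent)) \<longlonglongrightarrow> 0"
    using decay_exponent_pos
    by (intro tendsto_mult_right_zero tendsto_neg_powr filterlim_real_sequentially) simp
  show ?thesis
  proof (rule tendsto_sandwich[OF _ _ tendsto_const lim])
    show "\<forall>\<^sub>F n in sequentially.
        0 \<le> measure M (sym_diff ((\<lambda>x. x + g) ` B n) (B n)) / measure M (B n)"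
      by simp
    have "measure M (sym_diff ((\<lambda>x. x + g) ` B n) (B n)) / measure M (B n)
        \<le> D * real n powr (- decay_exponent)" if "2 * s \<le> n" for n
      using measure_sym_diff_right_translate_le[of s g n] measure_B_pos[of n] that
      unfolding s_def D_def by (simp add: divide_le_eq)
    then show "\<forall>\<^sub>F n in sequentially.
        measure M (sym_diff ((\<lambda>x. x + g) ` B n) (B n)) / measure M (B n)
          \<le> D * real n powr (- decay_exponent)"
      by (rule eventually_sequentiallyI[of "2 * s"])
  qed
qed

end

lemma continuous_on_translate:
  assumes "topological_group TYPE('a::{group_add,topological_space})"
  shows "continuous_on UNIV (\<lambda>y::'a. x + y)" and "continuous_on UNIV (\<lambda>y::'a. y + x)"
proof -
  have add: "continuous_on UNIV (\<lambda>p::'a \<times> 'a. fst p + snd p)"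
    using assms unfolding topological_group_def by blast
  have "continuous_on UNIV ((\<lambda>p::'a \<times> 'a. fst p + snd p) \<circ> (\<lambda>y. (x, y)))"
    by (rule continuous_on_compose) (auto intro!: continuous_intros continuous_on_subset[OF add])
  then show "continuous_on UNIV (\<lambda>y::'a. x + y)"
    by (simp add: o_def)
  have "continuous_on UNIV ((\<lambda>p::'a \<times> 'a. fst p + snd p) \<circ> (\<lambda>y. (y, x)))"
    by (rule continuous_on_compose) (auto intro!: continuous_intros continuous_on_subset[OF add])
  then show "continuous_on UNIV (\<lambda>y::'a. y + x)"
    by (simp add: o_def)
qed

lemma sets_borel_translate:
  fixes A :: "'a::{group_add,topological_space} set"
  assumes "topological_group TYPE('a)" and "A \<in> sets borel"
  shows "(\<lambda>y. x + y) ` A \<in> sets borel" and "(\<lambda>y. y + x) ` A \<in> sets borel"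
  unfolding image_add_left_eq_vimage image_add_right_eq_vimage
  using measurable_sets_borel[OF borel_measurable_continuous_onI assms(2)]
    continuous_on_translate[OF assms(1)] by blast+

lemma compact_setpow:
  assumes "topological_group TYPE('a::{group_add,topological_space})" and "compact (V :: 'a set)"
  shows "compact (setpow V n)"
proof (induction n)
  case (Suc n)
  have "setpow V (Suc n) = (\<lambda>p. fst p + snd p) ` (V \<times> setpow V n)"
    by force
  moreover have "continuous_on (V \<times> setpow V n) (\<lambda>p. fst p + snd p)"
    using assms(1) unfolding topological_group_def by (blast intro: continuous_on_subset)
  ultimately show ?case
    using assms(2) Suc.IH by (simp add: compact_continuous_image compact_Times)
qed simp

lemma haar_doubling_word_metric:
  fixes M :: "'a::{group_add, t2_space} measure"
  assumes group: "topological_group TYPE('a)" and haar: "left_haar_measure M"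
    and "compact V" and "uminus ` V = V" and "0 \<in> interior V"
    and "(\<Union>n. setpow V n) = UNIV"
    and "\<forall>n. n \<ge> 1 \<longrightarrow> measure M (setpow V (2*n)) \<le> C0 * measure M (setpow V n)"
  shows "doubling_word_metric V M C0"
proof -
  obtain sets: "sets M = sets borel"
    and invariant: "\<forall>A\<in>sets M. \<forall>g. emeasure M ((\<lambda>x. g + x) ` A) = emeasure M A"
    and finite: "\<forall>K. compact K \<longrightarrow> emeasure M K < \<infinity>"
    and positive: "\<forall>U. open U \<and> U \<noteq> {} \<longrightarrow> emeasure M U > 0"
    using haar unfolding left_haar_measure_def by (elim conjE) blast
  have compact_fmeasurable: "K \<in> fmeasurable M" if "compact K" for K
    using that finite by (intro fmeasurableI) (simp_all add: sets borel_closed compact_imp_closed)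
  have "0 < emeasure M (interior V)"
    using positive \<open>0 \<in> interior V\<close> by blast
  also have "\<dots> \<le> emeasure M V"
    using compact_fmeasurable[OF \<open>compact V\<close>] interior_subset
    by (intro emeasure_mono) (auto simp: fmeasurable_def)
  finally have "0 < measure M V"
    using compact_fmeasurable[OF \<open>compact V\<close>] by (simp add: emeasure_eq_measure2)
  show ?thesis
  proof unfold_locales
    show "0 \<in> V"
      using \<open>0 \<in> interior V\<close> interior_subset by blast
    show "setpow V n \<in> fmeasurable M" for n
      by (rule compact_fmeasurable[OF compact_setpow[OF group \<open>compact V\<close>]])
    show "(\<lambda>y. x + y) ` A \<in> sets M" "(\<lambda>y. y + x) ` A \<in> sets M" if "A \<in> sets M" for A x
      using sets_borel_translate[OF group] that unfolding sets by simp_all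
    show "emeasure M ((\<lambda>y. x + y) ` A) = emeasure M A" if "A \<in> sets M" for A x
      using invariant that by blast
  qed fact+
qed

theorem theorem4p14:
  fixes M :: "'a::{group_add, t2_space, second_countable_topology} measure"
    and V :: "'a set" and C0 :: real
  assumes "topological_group TYPE('a)"
    and "locally_compact_space_type TYPE('a)"
    and "left_haar_measure M"
    and "compact V" and "uminus ` V = V" and "0 \<in> interior V"
    and "(\<Union>n. setpow V n) = UNIV"
    and "\<forall>n::nat. n \<ge> 1 \<longrightarrow> measure M (setpow V (2*n)) \<le> C0 * measure M (setpow V n)"
  shows "(\<exists>\<delta>>0. \<exists>C>0. \<forall>n::nat. n \<ge> 1 \<longrightarrow>
            measure M (setpow V (n+1) - setpow V n) \<le> C * real n powr (-\<delta>) * measure M (setpow V n))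
       \<and> (\<forall>g. ((\<lambda>n. measure M (sym_diff ((\<lambda>x. x + g) ` setpow V n) (setpow V n))
                      / measure M (setpow V n)) \<longlonglongrightarrow> 0))"
proof -
  interpret doubling_word_metric V M C0
    using assms(1,3-8) by (rule haar_doubling_word_metric)
  show ?thesis
    using sphere_decay right_translate_asymptotically_invariant by blast
qed

end
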